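(* The hyperplane arrangement $\mathrm{I}(\mathrm{A}_1\oplus\mathfrak{g}_2,\mathbf{R})$ with $\mathbf{R}=(\mathbf{2},\mathbf{7})$ has exactly four chambers inside the open dual fundamental Weyl chamber, and their adjacency graph is a chain $1-2-3-4$. With respect to the sign vector $(\varpi^{(\mathbf{2},\mathbf{7})}_5,\varpi^{(\mathbf{2},\mathbf{7})}_6,\varpi^{(\mathbf{2},\mathbf{7})}_7)$, the chambers are: chamber 1: signs $(+,+,+)$, explicitly $0<\tfrac{1}{2}\phi_2<\phi_1<\tfrac{2}{3}\phi_2,\ \phi_1<\psi_1$; chamber 2: signs $(+,+,-)$, explicitly $0<\tfrac{1}{2}\phi_2<\phi_1<\tfrac{2}{3}\phi_2,\ \phi_2-\phi_1<\psi_1<\phi_1$; chamber 3: signs $(+,-,-)$, explicitly $0<\tfrac{3}{2}\phi_1<\phi_2<2\phi_1,\ 2\phi_1-\phi_2<\psi_1<\phi_2-\phi_1$; chamber 4: signs $(-,-,-)$, explicitly $0<\tfrac{3}{2}\phi_1<\phi_2<2\phi_1,\ 0<\psi_1<2\phi_1-\phi_2$. The wall between chamber $i$ and chamber $i+1$ ($i=1,2,3$) is the hyperplane orthogonal to the weight $\varpi^{(\mathbf{2},\mathbf{7})}_{8-i}$.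
   Context: Consider the semi-simple Lie algebra $\mathfrak{g}=\mathrm{A}_1\oplus\mathfrak{g}_2$ and the bifundamental representation $(\mathbf{2},\mathbf{7})$. Weights are written $(a;b,c)$ in the basis of fundamental weights, with $(a)$ a weight of $\mathrm{A}_1$ and $(b,c)$ a weight of $\mathfrak{g}_2$; a coroot vector is $\phi=(\psi_1;\phi_1,\phi_2)$ in the basis of fundamental coroots, and a weight acts on it by the natural pairing. The open dual fundamental Weyl chamber is $\psi_1>0$, $2\phi_1-\phi_2>0$, $-3\phi_1+2\phi_2>0$. The hyperplane arrangement $\mathrm{I}(\mathfrak{g},\mathbf{R})$ consists of the hyperplanes orthogonal (kernels) to the weights of $\mathbf{R}$, restricted to this open dual fundamental Weyl chamber. The relevant weights of $(\mathbf{2},\mathbf{7})$ are $\varpi^{(\mathbf{2},\mathbf{7})}_5=(1;-2,1)$, $\varpi^{(\mathbf{2},\mathbf{7})}_6=(1;1,-1)$, $\varpi^{(\mathbf{2},\mathbf{7})}_7=(1;-1,0)$; these are the only weights of $(\mathbf{2},\mathbf{7})$ whose hyperplanes meet the interior of the Weyl chamber. Adding the summands $(\mathbf{3},\mathbf{1}),(\mathbf{1},\mathbf{14}),(\mathbf{2},\mathbf{1}),(\mathbf{1},\mathbf{7})$ to $\mathbf{R}$ does not change the chamber structure. *)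

theory Defs
  imports "HOL-Analysis.Analysis"
begin

text \<open>Coroot vectors phi = (psi1, phi1, phi2) in the basis of fundamental coroots of
  A1 + g2 are modelled as points of real \<times> real \<times> real.  A weight (a; b, c) in the
  basis of fundamental weights is an integer triple, acting by the natural pairing.\<close>

type_synonym coroot = "real \<times> real \<times> real"
type_synonym weight = "int \<times> int \<times> int"

definition pairing :: "weight \<Rightarrow> coroot \<Rightarrow> real" where
  "pairing w p = (case w of (a, b, c) \<Rightarrow> case p of (psi, ph1, ph2) \<Rightarrow>
      of_int a * psi + of_int b * ph1 + of_int c * ph2)"

text \<open>Weights of the 7 of g2 (highest weight (1,0), simple roots (2,-1), (-3,2)).\<close>
definition weights_g2_7 :: "(int \<times> int) list" where
  "weights_g2_7 = [(1,0), (-1,1), (2,-1), (0,0), (-2,1), (1,-1), (-1,0)]"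

definition weights_2_7 :: "weight list" where
  "weights_2_7 = [(a, b, c). a \<leftarrow> [1, -1], (b, c) \<leftarrow> weights_g2_7]"

definition w5 :: weight where "w5 = (1, -2, 1)"
definition w6 :: weight where "w6 = (1, 1, -1)"
definition w7 :: weight where "w7 = (1, -1, 0)"

definition weyl_chamber :: "coroot set" where
  "weyl_chamber = {(psi, ph1, ph2). psi > 0 \<and> 2 * ph1 - ph2 > 0 \<and> - 3 * ph1 + 2 * ph2 > 0}"

definition hyperplane :: "weight \<Rightarrow> coroot set" where
  "hyperplane w = {p. pairing w p = 0}"

definition arr_hyperplanes :: "coroot set set" where
  "arr_hyperplanes = hyperplane ` set weights_2_7"

definition arr_chambers :: "coroot set set" where
  "arr_chambers = components (weyl_chamber - \<Union> arr_hyperplanes)"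

definition adjacent_via :: "coroot set \<Rightarrow> coroot set \<Rightarrow> coroot set \<Rightarrow> bool" where
  "adjacent_via C D H \<longleftrightarrow> C \<noteq> D \<and> H \<in> arr_hyperplanes \<and>
     (\<exists>p \<in> weyl_chamber. p \<in> H \<and> p \<in> closure C \<and> p \<in> closure D \<and>
        (\<forall>H' \<in> arr_hyperplanes. p \<in> H' \<longrightarrow> H' = H))"

definition sign_vec :: "coroot \<Rightarrow> real \<times> real \<times> real" where
  "sign_vec p = (sgn (pairing w5 p), sgn (pairing w6 p), sgn (pairing w7 p))"

definition chamber_expl :: "nat \<Rightarrow> coroot set" where
  "chamber_expl i =
    (if i = 1 then {(psi, ph1, ph2). 0 < ph2 / 2 \<and> ph2 / 2 < ph1 \<and> ph1 < 2 / 3 * ph2 \<and> ph1 < psi}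
     else if i = 2 then {(psi, ph1, ph2). 0 < ph2 / 2 \<and> ph2 / 2 < ph1 \<and> ph1 < 2 / 3 * ph2 \<and>
                                           ph2 - ph1 < psi \<and> psi < ph1}
     else if i = 3 then {(psi, ph1, ph2). 0 < 3 / 2 * ph1 \<and> 3 / 2 * ph1 < ph2 \<and> ph2 < 2 * ph1 \<and>
                                           2 * ph1 - ph2 < psi \<and> psi < ph2 - ph1}
     else {(psi, ph1, ph2). 0 < 3 / 2 * ph1 \<and> 3 / 2 * ph1 < ph2 \<and> ph2 < 2 * ph1 \<and>
                             0 < psi \<and> psi < 2 * ph1 - ph2})"

definition chamber_signs :: "nat \<Rightarrow> real \<times> real \<times> real" where
  "chamber_signs i =
    (if i = 1 then (1, 1, 1) else if i = 2 then (1, 1, -1)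
     else if i = 3 then (1, -1, -1) else (-1, -1, -1))"

definition wall_weight :: "nat \<Rightarrow> weight" where
  "wall_weight i = (if i = 1 then w7 else if i = 2 then w6 else w5)"

end

theory Submission
  imports Defs
begin

(* Inside the open Weyl chamber the only hyperplanes of the arrangement are those of w7, w6, w5
   (every other weight of (2,7) is, up to sign, positive there), and the three pairings are
   strictly ordered, <w7,p> < <w6,p> < <w5,p>, since successive differences are simple roots
   of g2. So the walls cut the Weyl chamber into four parallel convex slabs, chamber i lying
   between wall i-1 and wall i. They are open, connected and disjoint, hence the components.
   Points of two slabs' closures inside the Weyl chamber force the slabs to be consecutive and
   the point to lie on the common wall, and conversely a suitable point of each wall lies on no
   other hyperplane. *)

lemma path_endpoints_in_closure:
  fixes \<gamma> :: "real \<Rightarrow> 'a::topological_space"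
  assumes "a < b" "continuous_on {a..b} \<gamma>" "\<gamma> ` {a<..<b} \<subseteq> S"
  shows "\<gamma> a \<in> closure S" "\<gamma> b \<in> closure S"
proof -
  have "\<gamma> ` closure {a<..<b} \<subseteq> closure S"
    using assms closure_subset by (intro image_closure_subset) auto
  then show "\<gamma> a \<in> closure S" "\<gamma> b \<in> closure S"
    using \<open>a < b\<close> by auto
qed

definition weight_vector :: "weight \<Rightarrow> coroot" where
  "weight_vector w = (case w of (a, b, c) \<Rightarrow> (of_int a, of_int b, of_int c))"

lemma pairing_inner: "pairing w p = weight_vector w \<bullet> p"
  by (cases w; cases p) (simp add: pairing_def weight_vector_def)

lemma continuous_on_pairing [continuous_intros]:
  "continuous_on S f \<Longrightarrow> continuous_on S (\<lambda>x. pairing w (f x))"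
  unfolding pairing_inner by (intro continuous_intros)

lemma convex_pairing_gt: "convex {p. c < pairing w p}"
  unfolding pairing_inner by (rule convex_halfspace_gt)

lemma convex_pairing_lt: "convex {p. pairing w p < c}"
  unfolding pairing_inner by (rule convex_halfspace_lt)

lemma pairing_uminus: "pairing (- w) p = - pairing w p"
  by (cases w; cases p) (simp add: pairing_def)

lemma hyperplane_uminus: "hyperplane (- w) = hyperplane w"
  by (simp add: hyperplane_def pairing_uminus)

lemma adjacent_via_commute: "adjacent_via C D H \<longleftrightarrow> adjacent_via D C H"
  unfolding adjacent_via_def by blast

definition simple_roots :: "weight set" where
  "simple_roots = {(2, 0, 0), (0, 2, -1), (0, -3, 2)}"

lemma weyl_chamber_simple_roots: "weyl_chamber = {p. \<forall>\<alpha>\<in>simple_roots. 0 < pairing \<alpha> p}"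
  by (auto simp: weyl_chamber_def simple_roots_def pairing_def)

lemma open_weyl_chamber: "open weyl_chamber"
  unfolding weyl_chamber_simple_roots simple_roots_def
  by (auto intro!: open_Collect_conj open_Collect_less continuous_intros)

lemma convex_weyl_chamber: "convex weyl_chamber"
proof -
  have "weyl_chamber = (\<Inter>\<alpha>\<in>simple_roots. {p. 0 < pairing \<alpha> p})"
    unfolding weyl_chamber_simple_roots by blast
  then show ?thesis
    by (metis convex_INT convex_pairing_gt)
qed

lemma wall_pairing_strict_mono:
  assumes "p \<in> weyl_chamber"
  shows "strict_mono_on {1..3} (\<lambda>k. pairing (wall_weight k) p)"
proof -
  have "pairing (wall_weight 2) p = pairing (wall_weight 1) p + pairing (0, 2, -1) p"
       "pairing (wall_weight 3) p = pairing (wall_weight 2) p + pairing (0, -3, 2) p"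
    by (cases p; simp add: wall_weight_def w5_def w6_def w7_def pairing_def)+
  moreover have "0 < pairing (0, 2, -1) p" "0 < pairing (0, -3, 2) p"
    using assms by (auto simp: weyl_chamber_simple_roots simple_roots_def)
  moreover have "{1..3::nat} = {1, 2, 3}" by auto
  ultimately show ?thesis
    by (auto simp: strict_mono_on_def)
qed

definition chamber_positive_weights :: "weight set" where
  "chamber_positive_weights = {(1, 1, 0), (1, -1, 1), (1, 2, -1), (1, 0, 0)}"

lemma pairing_chamber_positive_weight:
  "p \<in> weyl_chamber \<Longrightarrow> w \<in> chamber_positive_weights \<Longrightarrow> 0 < pairing w p"
  by (cases p) (auto simp: weyl_chamber_def chamber_positive_weights_def pairing_def)

lemma set_weights_2_7:
  "set weights_2_7 = (chamber_positive_weights \<union> wall_weight ` {1..3})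
                   \<union> uminus ` (chamber_positive_weights \<union> wall_weight ` {1..3})"
proof -
  have "{1..3::nat} = {1, 2, 3}" by auto
  then show ?thesis
    by (auto simp: weights_2_7_def weights_g2_7_def chamber_positive_weights_def
        wall_weight_def w5_def w6_def w7_def)
qed

lemma arr_hyperplanes_eq:
  "arr_hyperplanes = hyperplane ` chamber_positive_weights \<union> hyperplane ` wall_weight ` {1..3}"
  unfolding arr_hyperplanes_def set_weights_2_7 image_Un image_image hyperplane_uminus
  by blast

lemma wall_in_arr_hyperplanes: "k \<in> {1..3} \<Longrightarrow> hyperplane (wall_weight k) \<in> arr_hyperplanes"
  unfolding arr_hyperplanes_eq by blast

lemma arr_hyperplane_through_weyl_chamber:
  assumes "H \<in> arr_hyperplanes" "p \<in> H" "p \<in> weyl_chamber"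
  shows "\<exists>k\<in>{1..3}. H = hyperplane (wall_weight k)"
proof -
  obtain w where w: "w \<in> chamber_positive_weights \<union> wall_weight ` {1..3}"
    and H: "H = hyperplane w"
    using assms(1) unfolding arr_hyperplanes_eq by blast
  have "pairing w p = 0" using assms(2) by (simp add: H hyperplane_def)
  then have "w \<notin> chamber_positive_weights"
    using pairing_chamber_positive_weight[OF assms(3)] by (metis less_irrefl)
  then have "w \<in> wall_weight ` {1..3}"
    using w by blast
  then show ?thesis using H by blast
qed

lemma weyl_chamber_minus_hyperplanes:
  "weyl_chamber - \<Union> arr_hyperplanes =
     {p \<in> weyl_chamber. \<forall>k\<in>{1..3}. pairing (wall_weight k) p \<noteq> 0}"
proof (intro set_eqI iffI)
  fix p assume p: "p \<in> weyl_chamber - \<Union> arr_hyperplanes"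
  then have "pairing (wall_weight k) p \<noteq> 0" if "k \<in> {1..3}" for k
    using wall_in_arr_hyperplanes[OF that] by (auto simp: hyperplane_def)
  then show "p \<in> {p \<in> weyl_chamber. \<forall>k\<in>{1..3}. pairing (wall_weight k) p \<noteq> 0}"
    using p by blast
next
  fix p assume p: "p \<in> {p \<in> weyl_chamber. \<forall>k\<in>{1..3}. pairing (wall_weight k) p \<noteq> 0}"
  have "p \<notin> H" if H: "H \<in> arr_hyperplanes" for H
  proof
    assume "p \<in> H"
    then obtain k where "k \<in> {1..3}" "H = hyperplane (wall_weight k)"
      using arr_hyperplane_through_weyl_chamber[OF H] p by blast
    then show False using p \<open>p \<in> H\<close> by (simp add: hyperplane_def)
  qed
  then show "p \<in> weyl_chamber - \<Union> arr_hyperplanes"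
    using p by blast
qed

lemma chamber_expl_between_walls:
  assumes "i \<in> {1..4}"
  shows "chamber_expl i = {p \<in> weyl_chamber.
           (1 < i \<longrightarrow> pairing (wall_weight (i - 1)) p < 0) \<and>
           (i < 4 \<longrightarrow> 0 < pairing (wall_weight i) p)}"
proof -
  consider "i = 1" | "i = 2" | "i = 3" | "i = 4"
    using assms by fastforce
  then show ?thesis
    by cases (auto simp: set_eq_iff chamber_expl_def weyl_chamber_def wall_weight_def
        w5_def w6_def w7_def pairing_def)
qed

lemma open_chamber_expl: "i \<in> {1..4} \<Longrightarrow> open (chamber_expl i)"
  unfolding chamber_expl_between_walls
  by (intro open_Collect_conj open_Collect_imp closed_Collect_const open_Collect_less
      continuous_intros) (simp add: open_weyl_chamber)

lemma convex_chamber_expl: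
  assumes "i \<in> {1..4}"
  shows "convex (chamber_expl i)"
proof -
  have "chamber_expl i = weyl_chamber \<inter> {p. 1 < i \<longrightarrow> pairing (wall_weight (i - 1)) p < 0}
                                     \<inter> {p. i < 4 \<longrightarrow> 0 < pairing (wall_weight i) p}"
    unfolding chamber_expl_between_walls[OF assms] by blast
  moreover have "convex {p. P \<longrightarrow> pairing w p < 0}" "convex {p. P \<longrightarrow> 0 < pairing w p}" for P w
    by (cases P; simp add: convex_pairing_lt convex_pairing_gt)+
  ultimately show ?thesis
    by (simp add: convex_Int convex_weyl_chamber)
qed

lemma closure_chamber_expl_subset:
  assumes "i \<in> {1..4}"
  shows "closure (chamber_expl i) \<subseteq>
    {p. (1 < i \<longrightarrow> pairing (wall_weight (i - 1)) p \<le> 0) \<and>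
        (i < 4 \<longrightarrow> 0 \<le> pairing (wall_weight i) p)}"
  unfolding chamber_expl_between_walls[OF assms]
  by (intro closure_minimal closed_Collect_conj closed_Collect_imp open_Collect_const closed_Collect_le
      continuous_intros) auto

lemma chamber_expl_disjoint:
  assumes "i \<in> {1..4}" "j \<in> {1..4}" "i < j"
  shows "chamber_expl i \<inter> chamber_expl j = {}"
proof (intro equals0I)
  fix p assume "p \<in> chamber_expl i \<inter> chamber_expl j"
  then have "p \<in> weyl_chamber" "0 < pairing (wall_weight i) p" "pairing (wall_weight (j - 1)) p < 0"
    using assms by (auto simp: chamber_expl_between_walls)
  moreover have "pairing (wall_weight i) p \<le> pairing (wall_weight (j - 1)) p"
    using assms by (intro strict_mono_on_leD[OF wall_pairing_strict_mono[OF \<open>p \<in> weyl_chamber\<close>]]) auto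
  ultimately show False by linarith
qed

lemma disjnt_chamber_expl:
  "i \<in> {1..4} \<Longrightarrow> j \<in> {1..4} \<Longrightarrow> i \<noteq> j \<Longrightarrow> disjnt (chamber_expl i) (chamber_expl j)"
  using chamber_expl_disjoint[of i j] chamber_expl_disjoint[of j i]
  by (cases "i < j") (auto simp: disjnt_def)

lemma chamber_expl_subset_complement:
  assumes "i \<in> {1..4}"
  shows "chamber_expl i \<subseteq> weyl_chamber - \<Union> arr_hyperplanes"
proof
  fix p assume p: "p \<in> chamber_expl i"
  then have W: "p \<in> weyl_chamber" using assms by (simp add: chamber_expl_between_walls)
  have "pairing (wall_weight k) p \<noteq> 0" if k: "k \<in> {1..3}" for k
  proof (cases "k < i")
    case True
    then have "pairing (wall_weight k) p \<le> pairing (wall_weight (i - 1)) p"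
      using assms k by (intro strict_mono_on_leD[OF wall_pairing_strict_mono[OF W]]) auto
    moreover have "pairing (wall_weight (i - 1)) p < 0"
      using p assms True k by (simp add: chamber_expl_between_walls)
    ultimately show ?thesis by linarith
  next
    case False
    then have "pairing (wall_weight i) p \<le> pairing (wall_weight k) p"
      using assms k by (intro strict_mono_on_leD[OF wall_pairing_strict_mono[OF W]]) auto
    moreover have "0 < pairing (wall_weight i) p"
      using p assms False k by (simp add: chamber_expl_between_walls)
    ultimately show ?thesis by linarith
  qed
  then show "p \<in> weyl_chamber - \<Union> arr_hyperplanes"
    using W by (simp add: weyl_chamber_minus_hyperplanes)
qed

lemma complement_subset_Union_chamber_expl:
  "weyl_chamber - \<Union> arr_hyperplanes \<subseteq> \<Union> (chamber_expl ` {1..4})"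
proof
  fix p assume "p \<in> weyl_chamber - \<Union> arr_hyperplanes"
  then have W: "p \<in> weyl_chamber" and nz: "\<forall>k\<in>{1..3}. pairing (wall_weight k) p \<noteq> 0"
    by (auto simp: weyl_chamber_minus_hyperplanes)
  define f where "f k = pairing (wall_weight k) p" for k
  have "f 1 < f 2" "f 2 < f 3"
    using strict_mono_onD[OF wall_pairing_strict_mono[OF W]] by (auto simp: f_def)
  moreover have "f 1 \<noteq> 0" "f 2 \<noteq> 0" "f 3 \<noteq> 0"
    using nz by (auto simp: f_def)
  ultimately consider "0 < f 1" | "f 1 < 0" "0 < f 2" | "f 2 < 0" "0 < f 3" | "f 3 < 0"
    by linarith
  then have "\<exists>i\<in>{1..4}. p \<in> chamber_expl i"
  proof cases
    case 1 then show ?thesis using W by (intro bexI[of _ 1]) (auto simp: chamber_expl_between_walls f_def)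
  next
    case 2 then show ?thesis using W by (intro bexI[of _ 2]) (auto simp: chamber_expl_between_walls f_def)
  next
    case 3 then show ?thesis using W by (intro bexI[of _ 3]) (auto simp: chamber_expl_between_walls f_def)
  next
    case 4 then show ?thesis using W by (intro bexI[of _ 4]) (auto simp: chamber_expl_between_walls f_def)
  qed
  then show "p \<in> \<Union> (chamber_expl ` {1..4})" by blast
qed

lemma Union_chamber_expl: "\<Union> (chamber_expl ` {1..4}) = weyl_chamber - \<Union> arr_hyperplanes"
  using chamber_expl_subset_complement complement_subset_Union_chamber_expl by blast

(* A line in the psi-direction through the Weyl chamber that crosses all three walls: it
   supplies a point of every chamber and, between consecutive chambers, a point of their wall. *)
definition test_point :: "real \<Rightarrow> coroot" where
  "test_point t = (t, 6, 10)"

lemma wall_pairing_test_point: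
  "k \<in> {1..3} \<Longrightarrow> pairing (wall_weight k) (test_point t) = t - 8 + 2 * real k"
  by (auto simp: test_point_def wall_weight_def w5_def w6_def w7_def pairing_def)

lemma test_point_in_chamber_expl_iff:
  assumes "i \<in> {1..4}"
  shows "test_point t \<in> chamber_expl i \<longleftrightarrow> 8 - 2 * real i < t \<and> (1 < i \<longrightarrow> t < 10 - 2 * real i)"
proof -
  have "test_point t \<in> weyl_chamber \<longleftrightarrow> 0 < t"
    by (simp add: test_point_def weyl_chamber_def)
  moreover have "pairing (wall_weight (i - 1)) (test_point t) = t - 10 + 2 * real i" if "1 < i"
  proof -
    have "i - 1 \<in> {1..3}" using assms that by auto
    then show ?thesis using that by (simp add: wall_pairing_test_point of_nat_diff)
  qed
  moreover have "i < 4 \<Longrightarrow> pairing (wall_weight i) (test_point t) = t - 8 + 2 * real i"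
    using assms wall_pairing_test_point[of i] by simp
  ultimately show ?thesis
    using assms by (auto simp: chamber_expl_between_walls)
qed

lemma test_point_in_chamber_expl: "i \<in> {1..4} \<Longrightarrow> test_point (9 - 2 * real i) \<in> chamber_expl i"
  by (simp add: test_point_in_chamber_expl_iff)

lemma wall_test_point_in_closures:
  assumes "i \<in> {1..3}"
  shows "test_point (8 - 2 * real i) \<in> closure (chamber_expl i)"
    and "test_point (8 - 2 * real i) \<in> closure (chamber_expl (i + 1))"
proof -
  have cont: "continuous_on S test_point" for S
    unfolding test_point_def by (intro continuous_intros)
  have "test_point ` {8 - 2 * real i<..<9 - 2 * real i} \<subseteq> chamber_expl i"
    using assms by (auto simp: test_point_in_chamber_expl_iff)
  then show "test_point (8 - 2 * real i) \<in> closure (chamber_expl i)"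
    by (intro path_endpoints_in_closure(1)[OF _ cont]) simp_all
  have "test_point ` {7 - 2 * real i<..<8 - 2 * real i} \<subseteq> chamber_expl (i + 1)"
    using assms by (auto simp: test_point_in_chamber_expl_iff)
  then show "test_point (8 - 2 * real i) \<in> closure (chamber_expl (i + 1))"
    by (intro path_endpoints_in_closure(2)[OF _ cont]) simp_all
qed

lemma inj_on_chamber_expl: "inj_on chamber_expl {1..4}"
proof (rule inj_onI, rule ccontr)
  fix i j :: nat
  assume ij: "i \<in> {1..4}" "j \<in> {1..4}" "chamber_expl i = chamber_expl j" "i \<noteq> j"
  then have "chamber_expl i = {}"
    using disjnt_chamber_expl[of i j] by (simp add: disjnt_def)
  then show False using test_point_in_chamber_expl[OF ij(1)] by simp
qed

lemma arr_chambers_eq: "arr_chambers = chamber_expl ` {1..4}"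
  unfolding arr_chambers_def
proof (rule components_open_unique)
  show "pairwise disjnt (chamber_expl ` {1..4})"
    unfolding pairwise_def using disjnt_chamber_expl by blast
  show "\<Union> (chamber_expl ` {1..4}) = weyl_chamber - \<Union> arr_hyperplanes"
    by (rule Union_chamber_expl)
  show "open X \<and> connected X \<and> X \<noteq> {}" if "X \<in> chamber_expl ` {1..4}" for X
    using that open_chamber_expl convex_connected[OF convex_chamber_expl] test_point_in_chamber_expl
    by blast
qed

lemma chamber_expl_sign_vec:
  assumes "i \<in> {1..4}"
  shows "chamber_expl i = {p \<in> weyl_chamber. sign_vec p = chamber_signs i}"
proof -
  consider "i = 1" | "i = 2" | "i = 3" | "i = 4"
    using assms by fastforce
  then show ?thesis
    by cases (auto simp: set_eq_iff chamber_expl_def weyl_chamber_def sign_vec_def chamber_signs_def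
        pairing_def w5_def w6_def w7_def sgn_if split: if_splits)
qed

lemma adjacent_chamber_expl_lt:
  assumes "i \<in> {1..4}" "j \<in> {1..4}" "i < j" "adjacent_via (chamber_expl i) (chamber_expl j) H"
  shows "j = i + 1 \<and> H = hyperplane (wall_weight i)"
proof -
  obtain p where W: "p \<in> weyl_chamber"
    and cl: "p \<in> closure (chamber_expl i)" "p \<in> closure (chamber_expl j)"
    and only_H: "\<forall>H'\<in>arr_hyperplanes. p \<in> H' \<longrightarrow> H' = H"
    using assms(4) unfolding adjacent_via_def by blast
  have ge: "0 \<le> pairing (wall_weight i) p"
    using closure_chamber_expl_subset[OF assms(1)] cl(1) assms(2,3) by auto
  have le: "pairing (wall_weight (j - 1)) p \<le> 0"
    using closure_chamber_expl_subset[OF assms(2)] cl(2) assms(1,3) by auto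
  have "j = i + 1"
  proof (rule ccontr)
    assume "j \<noteq> i + 1"
    then have "pairing (wall_weight i) p < pairing (wall_weight (j - 1)) p"
      using assms by (intro strict_mono_onD[OF wall_pairing_strict_mono[OF W]]) auto
    then show False using ge le by linarith
  qed
  moreover have "p \<in> hyperplane (wall_weight i)"
    using ge le \<open>j = i + 1\<close> by (simp add: hyperplane_def)
  moreover have "hyperplane (wall_weight i) \<in> arr_hyperplanes"
    using assms by (intro wall_in_arr_hyperplanes) auto
  ultimately show ?thesis
    using only_H by blast
qed

lemma adjacent_consecutive_chamber_expl:
  assumes "i \<in> {1..3}"
  shows "adjacent_via (chamber_expl i) (chamber_expl (i + 1)) (hyperplane (wall_weight i))"
proof -
  define p where "p = test_point (8 - 2 * real i)"
  have "chamber_expl i \<noteq> chamber_expl (i + 1)"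
    using inj_onD[OF inj_on_chamber_expl, of i "i + 1"] assms by auto
  moreover have "p \<in> weyl_chamber"
    using assms by (simp add: p_def test_point_def weyl_chamber_def)
  moreover have "p \<in> hyperplane (wall_weight i)"
    using assms by (simp add: p_def hyperplane_def wall_pairing_test_point)
  moreover have "H' = hyperplane (wall_weight i)" if H': "H' \<in> arr_hyperplanes" "p \<in> H'" for H'
  proof -
    obtain k where k: "k \<in> {1..3}" "H' = hyperplane (wall_weight k)"
      using arr_hyperplane_through_weyl_chamber[OF H' \<open>p \<in> weyl_chamber\<close>] by blast
    then have "real k = real i"
      using \<open>p \<in> H'\<close> by (simp add: p_def hyperplane_def wall_pairing_test_point)
    then show ?thesis using k by simp
  qed
  ultimately show ?thesis
    using assms wall_in_arr_hyperplanes wall_test_point_in_closures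
    unfolding adjacent_via_def p_def by blast
qed

lemma adjacent_via_chamber_expl_iff:
  assumes "i \<in> {1..4}" "j \<in> {1..4}"
  shows "adjacent_via (chamber_expl i) (chamber_expl j) H \<longleftrightarrow>
         (j = i + 1 \<or> i = j + 1) \<and> H = hyperplane (wall_weight (min i j))"
proof -
  have lt: "adjacent_via (chamber_expl i) (chamber_expl j) H \<longleftrightarrow>
              j = i + 1 \<and> H = hyperplane (wall_weight i)"
    if "i \<in> {1..4}" "j \<in> {1..4}" "i < j" for i j
    using that adjacent_chamber_expl_lt adjacent_consecutive_chamber_expl[of i] by auto
  show ?thesis
  proof (cases i j rule: linorder_cases)
    case less then show ?thesis using lt[OF assms] by auto
  next
    case equal then show ?thesis by (simp add: adjacent_via_def)
  next
    case greater then show ?thesis using lt[OF assms(2,1)] adjacent_via_commute by auto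
  qed
qed

theorem mainTheorem7:
  shows "arr_chambers = chamber_expl ` {1..4} \<and>
         card arr_chambers = 4 \<and>
         (\<forall>i \<in> {1..4::nat}. chamber_expl i = {p \<in> weyl_chamber. sign_vec p = chamber_signs i}) \<and>
         (\<forall>i \<in> {1..4::nat}. \<forall>j \<in> {1..4::nat}. \<forall>H.
            adjacent_via (chamber_expl i) (chamber_expl j) H \<longleftrightarrow>
            ((j = i + 1 \<or> i = j + 1) \<and> H = hyperplane (wall_weight (min i j))))"
  using arr_chambers_eq card_image[OF inj_on_chamber_expl] chamber_expl_sign_vec
    adjacent_via_chamber_expl_iff
  by simp

end
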